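(* Let $V$ be a real vector space of dimension $m\ge3$ with a non-degenerate symmetric inner product of arbitrary signature, and let $R$ be an algebraic curvature tensor on $V$. Then: (1) if $R$ is $k$-stein, then $\operatorname{trace}\{\mathcal{J}_R(x)^k\}=0$ for all $x\in\mathcal{N}$; (2) if $R$ is $m$-stein, then $\mathcal{J}_R(x)$ is nilpotent for all $x\in\mathcal{N}$; (3) if $\operatorname{trace}\{\mathcal{J}_R(x)\}=0$ for all $x\in\mathcal{N}$, then $R$ is Einstein.
   Context: An algebraic curvature tensor is $R\in\otimes^4V^*$ with $R(x,y,z,w)=R(z,w,x,y)=-R(y,x,z,w)$ and $R(x,y,z,w)+R(y,z,x,w)+R(z,x,y,w)=0$. The Jacobi operator is defined by $(\mathcal{J}_R(x)y,w)=R(y,x,x,w)$. The Ricci tensor is $\rho_R(x,y)=\operatorname{trace}\{z\mapsto R(z,x)y\}$, so that $\rho_R(x,x)=\operatorname{trace}\,\mathcal{J}_R(x)$. $R$ is Einstein if there is a constant $c_1$ with $\rho_R(x,y)=c_1(x,y)$ for all $x,y\in V$. $R$ is $k$-stein if there are constants $c_i$ with $\operatorname{trace}\{\mathcal{J}_R(x)^i\}=c_i(x,x)^i$ for all $x\in V$ and $1\le i\le k$. Everything is extended complex-multilinearly to $V_{\mathbb{C}}=V\otimes\mathbb{C}$; $\mathcal{N}=\{v\in V_{\mathbb{C}}:(v,v)=0\}$. A linear map $A$ is nilpotent if $A^m=0$, equivalently $\operatorname{trace}(A^i)=0$ for $1\le i\le m$. *)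

theory Defs
  imports "HOL-Analysis.Analysis"
begin

text \<open>The model space V is real^'n (dimension m = CARD('n)); the inner product is given by
  a real symmetric invertible Gram matrix g; an element R of the 4-fold tensor product of V^*
  is given by its components R i j k l = R(e_i,e_j,e_k,e_l). Everything is extended
  complex-multilinearly to V_C = complex^'n.\<close>

type_synonym ('n) tensor4 = "'n \<Rightarrow> 'n \<Rightarrow> 'n \<Rightarrow> 'n \<Rightarrow> real"

definition cvec :: "real^'n \<Rightarrow> complex^'n" where
  "cvec x = (\<chi> i. complex_of_real (x $ i))"

definition ipC :: "real^'n^'n \<Rightarrow> complex^'n \<Rightarrow> complex^'n \<Rightarrow> complex" where
  "ipC g x y = (\<Sum>i\<in>UNIV. \<Sum>j\<in>UNIV. complex_of_real (g $ i $ j) * x $ i * y $ j)"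

definition ipR :: "real^'n^'n \<Rightarrow> real^'n \<Rightarrow> real^'n \<Rightarrow> real" where
  "ipR g x y = (\<Sum>i\<in>UNIV. \<Sum>j\<in>UNIV. g $ i $ j * x $ i * y $ j)"

definition nondeg_inner :: "real^'n^'n \<Rightarrow> bool" where
  "nondeg_inner g \<longleftrightarrow> transpose g = g \<and> invertible g"

definition evalR :: "('n::finite) tensor4 \<Rightarrow> real^'n \<Rightarrow> real^'n \<Rightarrow> real^'n \<Rightarrow> real^'n \<Rightarrow> real" where
  "evalR R x y z w = (\<Sum>i\<in>UNIV. \<Sum>j\<in>UNIV. \<Sum>k\<in>UNIV. \<Sum>l\<in>UNIV.
      R i j k l * x $ i * y $ j * z $ k * w $ l)"

definition evalRC :: "('n::finite) tensor4 \<Rightarrow> complex^'n \<Rightarrow> complex^'n \<Rightarrow> complex^'n \<Rightarrow> complex^'n \<Rightarrow> complex" where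
  "evalRC R x y z w = (\<Sum>i\<in>UNIV. \<Sum>j\<in>UNIV. \<Sum>k\<in>UNIV. \<Sum>l\<in>UNIV.
      complex_of_real (R i j k l) * x $ i * y $ j * z $ k * w $ l)"

definition alg_curv_tensor :: "('n::finite) tensor4 \<Rightarrow> bool" where
  "alg_curv_tensor R \<longleftrightarrow>
    (\<forall>x y z w. evalR R x y z w = evalR R z w x y
             \<and> evalR R x y z w = - evalR R y x z w
             \<and> evalR R x y z w + evalR R y z x w + evalR R z x y w = 0)"

text \<open>Jacobi operator J_R(x) on V_C as a matrix, characterised by
  (J_R(x) y, w) = R(y,x,x,w); the inverse Gram matrix raises the index.\<close>
definition jacobi :: "real^'n^'n \<Rightarrow> ('n::finite) tensor4 \<Rightarrow> complex^'n \<Rightarrow> complex^'n^'n" where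
  "jacobi g R x = (\<chi> a b. \<Sum>c\<in>UNIV.
      complex_of_real (matrix_inv g $ a $ c) * evalRC R (axis b 1) x x (axis c 1))"

text \<open>Ricci tensor rho(x,y) = trace (z \<mapsto> R(z,x)y), where (R(z,x)y, w) = R(z,x,y,w).\<close>
definition ricci :: "real^'n^'n \<Rightarrow> ('n::finite) tensor4 \<Rightarrow> real^'n \<Rightarrow> real^'n \<Rightarrow> real" where
  "ricci g R x y = (\<Sum>a\<in>UNIV. \<Sum>c\<in>UNIV.
      matrix_inv g $ a $ c * evalR R (axis a 1) x y (axis c 1))"

definition einstein :: "real^'n^'n \<Rightarrow> ('n::finite) tensor4 \<Rightarrow> bool" where
  "einstein g R \<longleftrightarrow> (\<exists>c1::real. \<forall>x y. ricci g R x y = c1 * ipR g x y)"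

primrec matpow :: "'a::semiring_1^'n^'n \<Rightarrow> nat \<Rightarrow> 'a^'n^'n" where
  "matpow A 0 = mat 1"
| "matpow A (Suc p) = A ** matpow A p"

definition k_stein :: "real^'n^'n \<Rightarrow> ('n::finite) tensor4 \<Rightarrow> nat \<Rightarrow> bool" where
  "k_stein g R k \<longleftrightarrow> (\<exists>c::nat \<Rightarrow> real. \<forall>x::real^'n. \<forall>i\<in>{1..k}.
      trace (matpow (jacobi g R (cvec x)) i) = complex_of_real (c i * (ipR g x x) ^ i))"

definition null_cone :: "real^'n^'n \<Rightarrow> (complex^'n) set" where
  "null_cone g = {v. ipC g v v = 0}"

definition nilpotent_mat :: "'a::semiring_1^'n^'n \<Rightarrow> bool" where
  "nilpotent_mat A \<longleftrightarrow> (\<exists>p. matpow A p = 0)"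

end

theory Submission
  imports Defs "Jordan_Normal_Form.Jordan_Normal_Form_Existence"
begin

text \<open>
  (1) The entries of \<open>J_R(x)\<close>, and hence \<open>trace (J_R(x)^k) - c_k (x,x)^k\<close>, are polynomial in the
  coordinates of \<open>x \<in> V_C\<close>. A polynomial vanishing on \<open>V\<close> vanishes on \<open>V_C\<close> (restrict it to complex
  lines through real points), so the \<open>k\<close>-stein identity holds on \<open>V_C\<close>, and \<open>(x,x) = 0\<close> on the null cone.
  (2) If the traces of the first \<open>m\<close> powers of a complex \<open>m \<times> m\<close> matrix vanish, then so do the
  first \<open>m\<close> power sums of its eigenvalues, read off from a Schur triangularisation; hence all
  eigenvalues vanish and the matrix is nilpotent.
  (3) \<open>trace J_R(x) = \<rho>(x,x)\<close>, and a symmetric bilinear form on \<open>\<complex>^m\<close>, \<open>m \<ge> 2\<close>, that vanishes on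
  the null cone of a nondegenerate one is a multiple of it: choose \<open>x\<^sub>0\<close> with \<open>(x\<^sub>0,x\<^sub>0) \<noteq> 0\<close>,
  subtract the multiple that kills \<open>x\<^sub>0\<close>, and evaluate on the null vectors \<open>y \<plusminus> t x\<^sub>0\<close>, \<open>y \<bottom> x\<^sub>0\<close>.
\<close>

no_notation Matrix.vec_index (infixl "$" 100)
hide_const (open) Matrix.mat
hide_fact (open) Matrix.vec_eq_iff

section \<open>Polynomial functions on complex lines\<close>

text \<open>A substitute for polynomiality on \<open>\<complex>^n\<close> that avoids multivariate polynomials: only the
  restrictions to complex lines are required to be polynomials.\<close>
definition polynomial_on_lines :: "(complex^'n \<Rightarrow> complex) \<Rightarrow> bool" where
  "polynomial_on_lines F \<longleftrightarrow> (\<forall>u w. \<exists>p. \<forall>t. F (u + t *s w) = poly p t)"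

lemma polynomial_on_lines_const: "polynomial_on_lines (\<lambda>v. c)"
  unfolding polynomial_on_lines_def by (metis poly_const_conv)

lemma polynomial_on_lines_component: "polynomial_on_lines (\<lambda>v. v $ i)"
  unfolding polynomial_on_lines_def
proof (intro allI)
  fix u w :: "complex^'a"
  show "\<exists>p. \<forall>t. (u + t *s w) $ i = poly p t"
    by (rule exI[of _ "[:u $ i, w $ i:]"]) (simp add: mult.commute)
qed

lemma polynomial_on_lines_add:
  "polynomial_on_lines F \<Longrightarrow> polynomial_on_lines G \<Longrightarrow> polynomial_on_lines (\<lambda>v. F v + G v)"
  unfolding polynomial_on_lines_def by (metis poly_add)

lemma polynomial_on_lines_diff:
  "polynomial_on_lines F \<Longrightarrow> polynomial_on_lines G \<Longrightarrow> polynomial_on_lines (\<lambda>v. F v - G v)"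
  unfolding polynomial_on_lines_def by (metis poly_diff)

lemma polynomial_on_lines_mult:
  "polynomial_on_lines F \<Longrightarrow> polynomial_on_lines G \<Longrightarrow> polynomial_on_lines (\<lambda>v. F v * G v)"
  unfolding polynomial_on_lines_def by (metis poly_mult)

lemma polynomial_on_lines_power:
  "polynomial_on_lines F \<Longrightarrow> polynomial_on_lines (\<lambda>v. F v ^ k)"
  by (induction k) (auto intro: polynomial_on_lines_mult polynomial_on_lines_const)

lemma polynomial_on_lines_sum:
  "finite S \<Longrightarrow> (\<And>i. i \<in> S \<Longrightarrow> polynomial_on_lines (f i)) \<Longrightarrow>
    polynomial_on_lines (\<lambda>v. \<Sum>i\<in>S. f i v)"
  by (induction S rule: finite_induct) (auto intro: polynomial_on_lines_add polynomial_on_lines_const)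

lemmas polynomial_on_lines_intros =
  polynomial_on_lines_const polynomial_on_lines_component polynomial_on_lines_add
  polynomial_on_lines_diff polynomial_on_lines_mult polynomial_on_lines_power
  polynomial_on_lines_sum[OF finite]

text \<open>Every complex vector \<open>a + i b\<close> lies on the complex line \<open>a + t b\<close> through real points, and
  the restriction of \<open>F\<close> to this line is a polynomial vanishing at all real \<open>t\<close>.\<close>
lemma polynomial_on_lines_vanishing_on_reals:
  fixes F :: "complex^'n \<Rightarrow> complex"
  assumes F: "polynomial_on_lines F" and zero: "\<And>x. F (cvec x) = 0"
  shows "F v = 0"
proof -
  define a :: "real^'n" where "a = (\<chi> i. Re (v $ i))"
  define b :: "real^'n" where "b = (\<chi> i. Im (v $ i))"
  obtain p where p: "\<And>t. F (cvec a + t *s cvec b) = poly p t"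
    using F unfolding polynomial_on_lines_def by blast
  have "poly p (of_real t) = 0" for t
  proof -
    have "cvec a + of_real t *s cvec b = cvec (a + t *s b)"
      by (simp add: cvec_def vec_eq_iff)
    then show ?thesis using p zero by metis
  qed
  then have "range complex_of_real \<subseteq> {z. poly p z = 0}" by auto
  moreover have "infinite (range complex_of_real)"
    using inj_of_real infinite_UNIV_char_0 finite_imageD by blast
  ultimately have "p = 0" using poly_roots_finite finite_subset by blast
  moreover have "cvec a + \<i> *s cvec b = v"
    by (simp add: cvec_def vec_eq_iff a_def b_def complex_eq_iff)
  ultimately show ?thesis using p[of \<i>] by simp
qed

lemma polynomial_on_lines_jacobi_entry: "polynomial_on_lines (\<lambda>v. jacobi g R v $ a $ b)"
  unfolding jacobi_def evalRC_def by (simp, intro polynomial_on_lines_intros)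

lemma polynomial_on_lines_matpow_entry:
  assumes "\<And>a b. polynomial_on_lines (\<lambda>v. M v $ a $ b)"
  shows "polynomial_on_lines (\<lambda>v. matpow (M v) k $ a $ b)"
proof (induction k arbitrary: a b)
  case 0
  show ?case by (simp add: Finite_Cartesian_Product.mat_def polynomial_on_lines_const)
next
  case (Suc k)
  show ?case
    by (simp add: matrix_matrix_mult_def, intro polynomial_on_lines_intros assms Suc)
qed

lemma polynomial_on_lines_trace_jacobi_power:
  "polynomial_on_lines (\<lambda>v. trace (matpow (jacobi g R v) k))"
  unfolding trace_def
  by (intro polynomial_on_lines_intros polynomial_on_lines_matpow_entry
      polynomial_on_lines_jacobi_entry)

lemma polynomial_on_lines_ipC: "polynomial_on_lines (\<lambda>v. ipC g v v)"
  unfolding ipC_def by (intro polynomial_on_lines_intros)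

lemma ipC_cvec: "ipC g (cvec x) (cvec y) = complex_of_real (ipR g x y)"
  by (simp add: ipC_def ipR_def cvec_def)

lemma k_stein_trace_jacobi_power_null_cone:
  assumes k: "k \<ge> 1" and stein: "k_stein g R k" and v: "v \<in> null_cone g"
  shows "trace (matpow (jacobi g R v) k) = 0"
proof -
  obtain c where c: "\<And>x. trace (matpow (jacobi g R (cvec x)) k) = of_real (c k * (ipR g x x) ^ k)"
    using stein k unfolding k_stein_def by fastforce
  let ?F = "\<lambda>v. trace (matpow (jacobi g R v) k) - of_real (c k) * (ipC g v v) ^ k"
  have "?F v = 0"
  proof (rule polynomial_on_lines_vanishing_on_reals)
    show "polynomial_on_lines ?F"
      by (intro polynomial_on_lines_intros polynomial_on_lines_trace_jacobi_power
          polynomial_on_lines_ipC)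
    show "?F (cvec x) = 0" for x
      by (simp add: c ipC_cvec)
  qed
  moreover have "ipC g v v = 0" using v by (simp add: null_cone_def)
  ultimately show ?thesis using k by simp
qed

lemma k_stein_mono: "k \<le> m \<Longrightarrow> k_stein g R m \<Longrightarrow> k_stein g R k"
  unfolding k_stein_def by fastforce


section \<open>Nilpotency from vanishing traces of powers\<close>

lemma sum_poly_eq_zero_if_power_sums_zero:
  fixes d :: "nat \<Rightarrow> 'a::comm_ring_1"
  assumes power_sums: "\<And>k. k \<in> {1..N} \<Longrightarrow> (\<Sum>i<N. d i ^ k) = 0"
    and "poly p 0 = 0" and "degree p \<le> N"
  shows "(\<Sum>i<N. poly p (d i)) = 0"
proof -
  have "poly p x = (\<Sum>k\<le>N. coeff p k * x ^ k)" for x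
    using \<open>degree p \<le> N\<close> by (simp add: poly_altdef coeff_eq_0 sum.mono_neutral_left)
  then have "(\<Sum>i<N. poly p (d i)) = (\<Sum>k\<le>N. coeff p k * (\<Sum>i<N. d i ^ k))"
    by (simp add: sum_distrib_left sum.swap[of _ "{..N}"])
  also have "\<dots> = 0"
  proof (intro sum.neutral ballI)
    fix k assume "k \<in> {..N}"
    then show "coeff p k * (\<Sum>i<N. d i ^ k) = 0"
      using power_sums[of k] \<open>poly p 0 = 0\<close> by (cases "k = 0") (auto simp: poly_0_coeff_0)
  qed
  finally show ?thesis .
qed

text \<open>If some \<open>d i = m \<noteq> 0\<close>, test the power sums against the polynomial \<open>p\<close> of degree
  \<open>\<le> N\<close> that vanishes at \<open>0\<close> and at every value of \<open>d\<close> except \<open>m\<close>: the sum of \<open>p (d i)\<close> is then a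
  nonzero multiple of \<open>p m \<noteq> 0\<close>.\<close>
lemma power_sums_zero_imp_zero:
  fixes d :: "nat \<Rightarrow> 'a::field_char_0"
  assumes power_sums: "\<And>k. k \<in> {1..N} \<Longrightarrow> (\<Sum>i<N. d i ^ k) = 0" and "i < N"
  shows "d i = 0"
proof (rule ccontr)
  assume "d i \<noteq> 0"
  define m where "m = d i"
  define S where "S = d ` {..<N} - {0, m}"
  define p where "p = [:0, 1:] * (\<Prod>\<mu>\<in>S. [:-\<mu>, 1:])"
  have "finite S" unfolding S_def by simp
  have "card S < card (d ` {..<N})"
    using \<open>i < N\<close> \<open>d i \<noteq> 0\<close> unfolding S_def m_def by (intro psubset_card_mono) auto
  also have "\<dots> \<le> N" using card_image_le[of "{..<N}" d] by simp
  finally have "card S < N" .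
  have "degree (\<Prod>\<mu>\<in>S. [:-\<mu>, 1:]) \<le> card S"
    using degree_prod_sum_le[OF \<open>finite S\<close>, of "\<lambda>\<mu>. [:-\<mu>, 1:]"] by (simp add: o_def)
  then have "degree p \<le> N"
    unfolding p_def using degree_mult_le[of "[:0, 1:]"] \<open>card S < N\<close> by fastforce
  then have sum_zero: "(\<Sum>j<N. poly p (d j)) = 0"
    by (intro sum_poly_eq_zero_if_power_sums_zero power_sums) (simp_all add: p_def)
  have "poly p (d j) = (if d j = m then poly p m else 0)" if "j < N" for j
    using \<open>finite S\<close> that by (auto simp: p_def poly_prod S_def prod_zero_iff)
  then have "(\<Sum>j<N. poly p (d j)) = of_nat (card {j\<in>{..<N}. d j = m}) * poly p m"
    by (simp add: sum.inter_filter[symmetric])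
  with sum_zero have "of_nat (card {j\<in>{..<N}. d j = m}) * poly p m = 0"
    by simp
  moreover have "card {j\<in>{..<N}. d j = m} \<noteq> 0"
    using \<open>i < N\<close> by (auto simp: card_eq_0_iff m_def)
  moreover have "poly p m \<noteq> 0"
    using \<open>finite S\<close> \<open>d i \<noteq> 0\<close> by (simp add: p_def poly_prod S_def m_def prod_zero_iff)
  ultimately show False by simp
qed

definition mat_trace :: "'a::comm_semiring_0 mat \<Rightarrow> 'a" where
  "mat_trace A = (\<Sum>i<dim_row A. A $$ (i, i))"

lemma index_mult_mat_sum:
  assumes "A \<in> carrier_mat n m" "B \<in> carrier_mat m k" "i < n" "j < k"
  shows "(A * B) $$ (i, j) = (\<Sum>l<m. A $$ (i, l) * B $$ (l, j))"
  using assms by (simp add: index_mult_mat scalar_prod_def lessThan_atLeast0)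

lemma mat_trace_mult_comm:
  assumes A: "A \<in> carrier_mat n m" and B: "B \<in> carrier_mat m n"
  shows "mat_trace (A * B) = mat_trace (B * A)"
proof -
  have "mat_trace (A * B) = (\<Sum>i<n. \<Sum>l<m. A $$ (i, l) * B $$ (l, i))"
    unfolding mat_trace_def using A B
    by (intro sum.cong) (auto simp del: index_mult_mat(1) simp: index_mult_mat_sum)
  also have "\<dots> = (\<Sum>l<m. \<Sum>i<n. B $$ (l, i) * A $$ (i, l))"
    by (subst sum.swap) (simp add: mult.commute)
  also have "\<dots> = mat_trace (B * A)"
    unfolding mat_trace_def using A B
    by (intro sum.cong) (auto simp del: index_mult_mat(1) simp: index_mult_mat_sum)
  finally show ?thesis .
qed

lemma mat_trace_similar_mat_wit_pow:
  assumes "similar_mat_wit A B P Q"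
  shows "mat_trace (A ^\<^sub>m k) = mat_trace (B ^\<^sub>m k)"
proof -
  obtain n where A: "A \<in> carrier_mat n n" and B: "B \<in> carrier_mat n n"
    and P: "P \<in> carrier_mat n n" and Q: "Q \<in> carrier_mat n n" and QP: "Q * P = 1\<^sub>m n"
    using assms unfolding similar_mat_wit_def Let_def by auto
  have Bk: "B ^\<^sub>m k \<in> carrier_mat n n" using B by simp
  have "mat_trace (A ^\<^sub>m k) = mat_trace (P * (B ^\<^sub>m k * Q))"
    using similar_mat_wit_pow_id[OF assms] P Q Bk by (simp add: assoc_mult_mat)
  also have "\<dots> = mat_trace ((B ^\<^sub>m k * Q) * P)"
    using P Q Bk by (intro mat_trace_mult_comm) auto
  also have "\<dots> = mat_trace (B ^\<^sub>m k)"
    using P Q Bk QP by (simp add: assoc_mult_mat right_mult_one_mat[OF Bk])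
  finally show ?thesis .
qed

lemma upper_triangular_mult:
  assumes A: "A \<in> carrier_mat n n" "upper_triangular A"
    and B: "B \<in> carrier_mat n n" "upper_triangular B"
  shows "upper_triangular (A * B)" and "i < n \<Longrightarrow> (A * B) $$ (i, i) = A $$ (i, i) * B $$ (i, i)"
proof -
  have outside: "A $$ (i, l) * B $$ (l, j) = 0" if "j < l \<or> l < i" "l < n" "i < n" for i j l
    using that A B upper_triangularD[of A l i] upper_triangularD[of B j l] by auto
  have entry: "(A * B) $$ (i, j) = (\<Sum>l\<in>{i..j}. A $$ (i, l) * B $$ (l, j))"
    if "i < n" "j < n" for i j
  proof -
    have "(A * B) $$ (i, j) = (\<Sum>l<n. A $$ (i, l) * B $$ (l, j))"
      using index_mult_mat_sum[OF A(1) B(1) that] .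
    also have "\<dots> = (\<Sum>l\<in>{i..j}. A $$ (i, l) * B $$ (l, j))"
      using that outside by (intro sum.mono_neutral_right) auto
    finally show ?thesis .
  qed
  show "upper_triangular (A * B)"
    using A by (intro upper_triangularI) (simp del: index_mult_mat(1) add: entry)
  show "i < n \<Longrightarrow> (A * B) $$ (i, i) = A $$ (i, i) * B $$ (i, i)"
    by (simp del: index_mult_mat(1) add: entry)
qed

lemma upper_triangular_pow_mat:
  assumes B: "B \<in> carrier_mat n n" "upper_triangular B"
  shows "upper_triangular (B ^\<^sub>m k)" and "i < n \<Longrightarrow> (B ^\<^sub>m k) $$ (i, i) = B $$ (i, i) ^ k"
proof -
  have "upper_triangular (B ^\<^sub>m k) \<and> (\<forall>i<n. (B ^\<^sub>m k) $$ (i, i) = B $$ (i, i) ^ k)"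
  proof (induction k)
    case 0
    show ?case using B by simp
  next
    case (Suc k)
    have "B ^\<^sub>m k \<in> carrier_mat n n" using B by simp
    then show ?case
      using Suc B upper_triangular_mult[of "B ^\<^sub>m k" n B]
      by (auto simp del: index_mult_mat(1) power_Suc simp: power_Suc2)
  qed
  then show "upper_triangular (B ^\<^sub>m k)" and "i < n \<Longrightarrow> (B ^\<^sub>m k) $$ (i, i) = B $$ (i, i) ^ k"
    by auto
qed

lemma strictly_upper_triangular_pow_mat:
  assumes B: "B \<in> carrier_mat n n" and strict: "\<And>i j. j \<le> i \<Longrightarrow> i < n \<Longrightarrow> B $$ (i, j) = 0"
  shows "i < n \<Longrightarrow> j < n \<Longrightarrow> j < i + k \<Longrightarrow> (B ^\<^sub>m k) $$ (i, j) = 0"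
proof (induction k arbitrary: j)
  case 0
  then show ?case using B by simp
next
  case (Suc k)
  have "(B ^\<^sub>m k) $$ (i, l) * B $$ (l, j) = 0" if "l < n" for l
    using Suc strict[of j l] that by (cases "l < i + k") auto
  then show ?case
    using Suc.prems B by (simp del: index_mult_mat(1) add: index_mult_mat_sum[of _ n n])
qed

lemma strictly_upper_triangular_nilpotent:
  assumes "B \<in> carrier_mat n n" and "\<And>i j. j \<le> i \<Longrightarrow> i < n \<Longrightarrow> B $$ (i, j) = 0"
  shows "B ^\<^sub>m n = 0\<^sub>m n n"
  using assms strictly_upper_triangular_pow_mat[OF assms] by (intro eq_matI) auto

text \<open>Triangularise \<open>M\<close> by a Schur decomposition: the traces of the powers of the triangular
  factor are the power sums of its diagonal, which therefore vanishes.\<close>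
lemma nilpotent_if_trace_powers_zero:
  fixes M :: "complex mat"
  assumes M: "M \<in> carrier_mat n n"
    and traces: "\<And>k. k \<in> {1..n} \<Longrightarrow> mat_trace (M ^\<^sub>m k) = 0"
  shows "M ^\<^sub>m n = 0\<^sub>m n n"
proof -
  obtain es where "char_poly M = (\<Prod>a\<leftarrow>es. [:- a, 1:])"
    using char_poly_factorized[OF M] by auto
  then obtain B P Q where sim: "similar_mat_wit M B P Q" and ut: "upper_triangular B"
    using schur_decomposition[OF M] by (metis prod_cases3)
  then have B: "B \<in> carrier_mat n n"
    using M unfolding similar_mat_wit_def Let_def by auto
  have "B $$ (i, i) = 0" if "i < n" for i
  proof (rule power_sums_zero_imp_zero[OF _ that])
    fix k assume "k \<in> {1..n}"
    then have "mat_trace (B ^\<^sub>m k) = 0"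
      using traces mat_trace_similar_mat_wit_pow[OF sim] by simp
    then show "(\<Sum>i<n. B $$ (i, i) ^ k) = 0"
      using B ut by (simp add: mat_trace_def upper_triangular_pow_mat)
  qed
  then have "B ^\<^sub>m n = 0\<^sub>m n n"
    using B ut by (intro strictly_upper_triangular_nilpotent) (auto simp: le_less)
  then show ?thesis
    using similar_mat_wit_pow_id[OF sim, of n] sim M
    unfolding similar_mat_wit_def Let_def by auto
qed

lemma matpow_Suc_right: "matpow A (Suc k) = matpow A k ** A"
proof (induction k)
  case 0
  show ?case by (simp add: matrix_mul_lid matrix_mul_rid)
next
  case (Suc k)
  then show ?case by (metis matpow.simps(2) matrix_mul_assoc)
qed

text \<open>Schur triangularisation is available for the matrices of \<open>Jordan_Normal_Form\<close>; Cartesian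
  matrices are transferred to them along a fixed enumeration of the index type.\<close>
definition cart_index :: "nat \<Rightarrow> 'n::finite" where
  "cart_index = (SOME h. bij_betw h {..<CARD('n)} UNIV)"

lemma bij_betw_cart_index: "bij_betw (cart_index :: nat \<Rightarrow> 'n::finite) {..<CARD('n)} UNIV"
proof -
  have "\<exists>h :: nat \<Rightarrow> 'n. bij_betw h {..<CARD('n)} UNIV"
    using ex_bij_betw_nat_finite[of "UNIV :: 'n set"] by (auto simp: lessThan_atLeast0)
  then show ?thesis unfolding cart_index_def by (rule someI_ex)
qed

lemma sum_UNIV_cart_index: "(\<Sum>c\<in>UNIV. f c) = (\<Sum>l<CARD('n). f (cart_index l :: 'n::finite))"
  using sum.reindex_bij_betw[OF bij_betw_cart_index, of f] by simp

definition mat_of_cart :: "'a^'n^'n \<Rightarrow> 'a mat" where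
  "mat_of_cart A = Matrix.mat CARD('n) CARD('n) (\<lambda>(i, j). A $ cart_index i $ cart_index j)"

lemma mat_of_cart_carrier: "mat_of_cart (A :: 'a^'n^'n) \<in> carrier_mat CARD('n) CARD('n)"
  by (simp add: mat_of_cart_def)

lemma mat_of_cart_mult:
  fixes A B :: "'a::semiring_1^'n^'n"
  shows "mat_of_cart (A ** B) = mat_of_cart A * mat_of_cart B"
proof (rule eq_matI)
  fix i j
  assume "i < dim_row (mat_of_cart A * mat_of_cart B)" "j < dim_col (mat_of_cart A * mat_of_cart B)"
  then have "i < CARD('n)" "j < CARD('n)" by (simp_all add: mat_of_cart_def)
  then show "mat_of_cart (A ** B) $$ (i, j) = (mat_of_cart A * mat_of_cart B) $$ (i, j)"
    by (simp del: index_mult_mat(1) add: index_mult_mat_sum[OF mat_of_cart_carrier mat_of_cart_carrier])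
      (simp add: mat_of_cart_def matrix_matrix_mult_def sum_UNIV_cart_index)
qed (simp_all add: mat_of_cart_def)

lemma mat_of_cart_one: "mat_of_cart (mat 1 :: 'a::semiring_1^'n^'n) = 1\<^sub>m CARD('n)"
proof (rule eq_matI)
  fix i j assume "i < dim_row (1\<^sub>m CARD('n))" "j < dim_col (1\<^sub>m CARD('n))"
  moreover from this have "(cart_index i :: 'n) = cart_index j \<longleftrightarrow> i = j"
    using bij_betw_cart_index unfolding bij_betw_def inj_on_def by auto
  ultimately show "mat_of_cart (mat 1 :: 'a^'n^'n) $$ (i, j) = 1\<^sub>m CARD('n) $$ (i, j)"
    by (simp add: mat_of_cart_def Finite_Cartesian_Product.mat_def)
qed (simp_all add: mat_of_cart_def)

lemma mat_of_cart_matpow: "mat_of_cart (matpow A k) = mat_of_cart A ^\<^sub>m k"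
proof (induction k)
  case 0
  show ?case by (simp add: mat_of_cart_one) (simp add: mat_of_cart_def)
next
  case (Suc k)
  then show ?case by (simp only: matpow_Suc_right mat_of_cart_mult pow_mat.simps)
qed

lemma trace_eq_mat_trace: "trace A = mat_trace (mat_of_cart A)"
  by (simp add: trace_def mat_trace_def mat_of_cart_def sum_UNIV_cart_index)

lemma mat_of_cart_eq_zero_iff: "mat_of_cart A = 0\<^sub>m CARD('n) CARD('n) \<longleftrightarrow> A = (0 :: 'a::zero^'n^'n)"
proof
  assume zero: "mat_of_cart A = 0\<^sub>m CARD('n) CARD('n)"
  have "A $ cart_index i $ cart_index j = 0" if "i < CARD('n)" "j < CARD('n)" for i j
    using arg_cong[OF zero, of "\<lambda>M. M $$ (i, j)"] that by (simp add: mat_of_cart_def)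
  moreover have "a \<in> cart_index ` {..<CARD('n)}" for a :: 'n
    using bij_betw_cart_index by (auto simp: bij_betw_def)
  ultimately have "A $ a $ b = 0" for a b
    by (metis imageE lessThan_iff)
  then show "A = 0"
    by (simp add: vec_eq_iff)
qed (auto simp: mat_of_cart_def)

lemma nilpotent_mat_if_trace_powers_zero:
  fixes A :: "complex^'n^'n"
  assumes "\<And>k. k \<in> {1..CARD('n)} \<Longrightarrow> trace (matpow A k) = 0"
  shows "nilpotent_mat A"
proof -
  have "mat_of_cart A ^\<^sub>m CARD('n) = 0\<^sub>m CARD('n) CARD('n)"
    using assms
    by (intro nilpotent_if_trace_powers_zero mat_of_cart_carrier)
      (simp add: trace_eq_mat_trace mat_of_cart_matpow)
  then have "matpow A CARD('n) = 0"
    by (simp add: mat_of_cart_matpow[symmetric] mat_of_cart_eq_zero_iff)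
  then show ?thesis unfolding nilpotent_mat_def by blast
qed


section \<open>Symmetric bilinear forms vanishing on a null cone\<close>

definition symmetric_bilinear :: "(complex^'n \<Rightarrow> complex^'n \<Rightarrow> complex) \<Rightarrow> bool" where
  "symmetric_bilinear F \<longleftrightarrow>
     (\<forall>u v w. F (u + v) w = F u w + F v w) \<and> (\<forall>c u w. F (c *s u) w = c * F u w) \<and>
     (\<forall>u v. F u v = F v u)"

definition nondegenerate :: "(complex^'n \<Rightarrow> complex^'n \<Rightarrow> complex) \<Rightarrow> bool" where
  "nondegenerate F \<longleftrightarrow> (\<forall>u. (\<forall>v. F u v = 0) \<longrightarrow> u = 0)"

context
  fixes F :: "complex^'n \<Rightarrow> complex^'n \<Rightarrow> complex"
  assumes F: "symmetric_bilinear F"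
begin

lemma symmetric_bilinear_commute: "F u v = F v u"
  using F unfolding symmetric_bilinear_def by blast

lemma symmetric_bilinear_add_left: "F (u + v) w = F u w + F v w"
  using F unfolding symmetric_bilinear_def by blast

lemma symmetric_bilinear_scale_left: "F (c *s u) w = c * F u w"
  using F unfolding symmetric_bilinear_def by blast

lemma symmetric_bilinear_add_right: "F w (u + v) = F w u + F w v"
  by (metis symmetric_bilinear_add_left symmetric_bilinear_commute)

lemma symmetric_bilinear_scale_right: "F w (c *s u) = c * F w u"
  by (metis symmetric_bilinear_scale_left symmetric_bilinear_commute)

lemma symmetric_bilinear_diff_right: "F w (u - v) = F w u - F w v"
  by (metis diff_add_cancel symmetric_bilinear_add_right add_diff_cancel_right')

lemmas symmetric_bilinear_simps =
  symmetric_bilinear_add_left symmetric_bilinear_add_right symmetric_bilinear_diff_right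
  symmetric_bilinear_scale_left symmetric_bilinear_scale_right

lemma symmetric_bilinear_square_line:
  "F (u + t *s w) (u + t *s w) = F u u + 2 * t * F u w + t\<^sup>2 * F w w"
  by (simp add: symmetric_bilinear_simps symmetric_bilinear_commute[of w u] power2_eq_square
      algebra_simps)

lemma symmetric_bilinear_polarization:
  assumes "\<And>v. F v v = 0"
  shows "F u w = 0"
  using symmetric_bilinear_square_line[of u 1 w] assms by simp

lemma symmetric_bilinear_orthogonal_nonzero:
  assumes "CARD('n) \<ge> 2"
  obtains w where "w \<noteq> 0" "F x w = 0"
proof -
  obtain i j :: 'n where "i \<noteq> j"
    using assms card_le_Suc0_iff_eq[of "UNIV :: 'n set"] by auto
  show thesis
  proof (cases "F x (axis i 1) = 0")
    case True
    then show ?thesis by (intro that[of "axis i 1"]) simp_all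
  next
    case False
    let ?w = "F x (axis j 1) *s axis i 1 - F x (axis i 1) *s axis j (1::complex)"
    have "?w $ j \<noteq> 0" using False \<open>i \<noteq> j\<close> by (simp add: axis_def)
    then have "?w \<noteq> 0" by (metis zero_index)
    moreover have "F x ?w = 0"
      by (simp add: symmetric_bilinear_simps)
    ultimately show ?thesis by (rule that)
  qed
qed

lemma exists_nonisotropic:
  assumes "nondegenerate F"
  obtains x where "F x x \<noteq> 0"
proof -
  have "axis undefined 1 \<noteq> (0 :: complex^'n)" by simp
  then show thesis
    using assms symmetric_bilinear_polarization that unfolding nondegenerate_def by blast
qed

end

lemma symmetric_bilinear_diff:
  assumes F: "symmetric_bilinear F" and G: "symmetric_bilinear G"
  shows "symmetric_bilinear (\<lambda>u v. F u v - c * G u v)"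
  using symmetric_bilinear_commute[OF F] symmetric_bilinear_commute[OF G]
  unfolding symmetric_bilinear_def
  by (simp add: symmetric_bilinear_simps[OF F] symmetric_bilinear_simps[OF G] algebra_simps)


definition vanishes_on_null_cone ::
    "(complex^'n \<Rightarrow> complex^'n \<Rightarrow> complex) \<Rightarrow> (complex^'n \<Rightarrow> complex^'n \<Rightarrow> complex) \<Rightarrow> bool"
  where "vanishes_on_null_cone Q B \<longleftrightarrow> (\<forall>v. Q v v = 0 \<longrightarrow> B v v = 0)"

context
  fixes Q :: "complex^'n \<Rightarrow> complex^'n \<Rightarrow> complex" and x0 :: "complex^'n"
  assumes Q: "symmetric_bilinear Q" and x0: "Q x0 x0 \<noteq> 0"
begin

lemma orthogonal_decomposition:
  obtains y a where "u = y + a *s x0" "Q x0 y = 0"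
proof
  let ?a = "Q x0 u / Q x0 x0"
  show "u = (u - ?a *s x0) + ?a *s x0" by simp
  show "Q x0 (u - ?a *s x0) = 0" using x0 by (simp add: symmetric_bilinear_simps[OF Q])
qed

lemma exists_orthogonal_nonisotropic:
  assumes nondeg: "nondegenerate Q" and card: "CARD('n) \<ge> 2"
  obtains z where "Q x0 z = 0" "Q z z \<noteq> 0"
proof -
  obtain w where w: "w \<noteq> 0" "Q x0 w = 0"
    using symmetric_bilinear_orthogonal_nonzero[OF Q card] by blast
  then obtain v where "Q w v \<noteq> 0"
    using nondeg unfolding nondegenerate_def by blast
  obtain y a where y: "v = y + a *s x0" "Q x0 y = 0" by (rule orthogonal_decomposition)
  with \<open>Q w v \<noteq> 0\<close> w(2) have "Q w y \<noteq> 0"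
    using symmetric_bilinear_commute[OF Q, of w x0] by (simp add: symmetric_bilinear_simps[OF Q])
  then have "Q w w \<noteq> 0 \<or> Q y y \<noteq> 0 \<or> Q (w + y) (w + y) \<noteq> 0"
    using symmetric_bilinear_square_line[OF Q, of w 1 y] by auto
  moreover have "Q x0 (w + y) = 0"
    using w(2) y(2) by (simp add: symmetric_bilinear_simps[OF Q])
  ultimately show thesis
    using that w(2) y(2) by blast
qed

context
  fixes D :: "complex^'n \<Rightarrow> complex^'n \<Rightarrow> complex"
  assumes D: "symmetric_bilinear D" and null: "vanishes_on_null_cone Q D" and D_x0: "D x0 x0 = 0"
begin

text \<open>For \<open>y \<bottom> x0\<close> the line \<open>y + t x0\<close> meets the null cone at \<open>t = \<plusminus>\<surd>(-Q y y / Q x0 x0)\<close>.\<close>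
lemma vanishes_on_null_cone_orthogonal:
  assumes y: "Q x0 y = 0"
  shows "D y y = 0" and "Q y y \<noteq> 0 \<Longrightarrow> D x0 y = 0"
proof -
  define t where "t = csqrt (- Q y y / Q x0 x0)"
  have "Q (y + s *s x0) (y + s *s x0) = 0" if "s\<^sup>2 = t\<^sup>2" for s
    using symmetric_bilinear_square_line[OF Q, of y s x0] that x0 y
      symmetric_bilinear_commute[OF Q, of x0 y]
    by (simp add: t_def)
  then have on_cone: "D (y + s *s x0) (y + s *s x0) = 0" if "s\<^sup>2 = t\<^sup>2" for s
    using null that unfolding vanishes_on_null_cone_def by blast
  have plus: "D y y + 2 * t * D y x0 = 0"
    using on_cone[of t] symmetric_bilinear_square_line[OF D, of y t x0] D_x0 by simp
  have minus: "D y y - 2 * t * D y x0 = 0"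
    using on_cone[of "-t"] symmetric_bilinear_square_line[OF D, of y "-t" x0] D_x0 by simp
  from plus minus show "D y y = 0" by (simp add: algebra_simps)
  assume "Q y y \<noteq> 0"
  then have "t \<noteq> 0" using x0 by (simp add: t_def)
  with plus minus show "D x0 y = 0"
    using symmetric_bilinear_commute[OF D, of x0 y] by (simp add: algebra_simps)
qed

text \<open>Orthogonal to \<open>x0\<close>, a null vector \<open>y\<close> is the difference of the non-null vectors \<open>y + s z\<close> and
  \<open>s z\<close> for a suitable \<open>s \<in> {1, 2}\<close>.\<close>
lemma vanishes_on_null_cone_imp_zero:
  assumes nondeg: "nondegenerate Q" and card: "CARD('n) \<ge> 2"
  shows "D u v = 0"
proof -
  obtain z where z: "Q x0 z = 0" "Q z z \<noteq> 0"
    using exists_orthogonal_nonisotropic[OF nondeg card] by blast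
  have cross: "D x0 y = 0" if y: "Q x0 y = 0" for y
  proof (cases "Q y y = 0")
    case False
    then show ?thesis using vanishes_on_null_cone_orthogonal(2)[OF y] by blast
  next
    case True
    have line: "Q (y + s *s z) (y + s *s z) = 2 * s * Q y z + s\<^sup>2 * Q z z" for s
      using symmetric_bilinear_square_line[OF Q, of y s z] True by simp
    have "2 * Q z z = Q (y + 2 *s z) (y + 2 *s z) - 2 * Q (y + 1 *s z) (y + 1 *s z)"
      by (simp only: line) (simp add: power2_eq_square algebra_simps)
    then have "Q (y + 1 *s z) (y + 1 *s z) \<noteq> 0 \<or> Q (y + 2 *s z) (y + 2 *s z) \<noteq> 0"
      using z(2) by auto
    then obtain s where s: "Q (y + s *s z) (y + s *s z) \<noteq> 0"
      by blast
    have "Q x0 (y + s *s z) = 0"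
      using y z by (simp add: symmetric_bilinear_simps[OF Q])
    then have "D x0 (y + s *s z) = 0"
      using vanishes_on_null_cone_orthogonal(2) s by blast
    moreover have "D x0 z = 0"
      using vanishes_on_null_cone_orthogonal(2) z by blast
    ultimately show ?thesis by (simp add: symmetric_bilinear_simps[OF D])
  qed
  have "D w w = 0" for w
  proof -
    obtain y a where "w = y + a *s x0" "Q x0 y = 0" by (rule orthogonal_decomposition)
    then show ?thesis
      using symmetric_bilinear_square_line[OF D, of y a x0] vanishes_on_null_cone_orthogonal(1)
        cross D_x0 symmetric_bilinear_commute[OF D, of y x0]
      by simp
  qed
  then show ?thesis by (rule symmetric_bilinear_polarization[OF D])
qed

end

end

lemma vanishes_on_null_cone_imp_proportional:
  fixes Q B :: "complex^'n \<Rightarrow> complex^'n \<Rightarrow> complex"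
  assumes Q: "symmetric_bilinear Q" and nondeg: "nondegenerate Q" and card: "CARD('n) \<ge> 2"
    and B: "symmetric_bilinear B" and null: "vanishes_on_null_cone Q B"
  obtains c where "\<And>u v. B u v = c * Q u v"
proof -
  obtain x0 where x0: "Q x0 x0 \<noteq> 0" using exists_nonisotropic[OF Q nondeg] .
  define c where "c = B x0 x0 / Q x0 x0"
  have "vanishes_on_null_cone Q (\<lambda>u v. B u v - c * Q u v)"
    using null unfolding vanishes_on_null_cone_def by simp
  moreover have "B x0 x0 - c * Q x0 x0 = 0" using x0 by (simp add: c_def)
  ultimately have "B u v - c * Q u v = 0" for u v
    by (rule vanishes_on_null_cone_imp_zero[OF Q x0 symmetric_bilinear_diff[OF B Q] _ _ nondeg card])
  then show thesis using that[of c] by simp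
qed


section \<open>Curvature tensors in coordinates\<close>

lemma if_zero_one_simps:
  "(x::'a::semiring_1) * (if P then 1 else 0) = (if P then x else 0)"
  "(if P then (x::'a::semiring_1) else 0) * y = (if P then x * y else 0)"
  "(\<Sum>j\<in>S. if P then f j else 0) = (if P then \<Sum>j\<in>S. f j else 0)"
  by simp_all

lemmas axis_sum_simps = axis_def if_zero_one_simps sum.delta sum.delta'

lemma evalR_axis_axis:
  "evalR R (axis a 1) x y (axis c 1) = (\<Sum>j\<in>UNIV. \<Sum>k\<in>UNIV. R a j k c * x $ j * y $ k)"
  by (simp add: evalR_def axis_sum_simps)

lemma evalRC_axis_axis:
  "evalRC R (axis a 1) x y (axis c 1) = (\<Sum>j\<in>UNIV. \<Sum>k\<in>UNIV. of_real (R a j k c) * x $ j * y $ k)"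
  by (simp add: evalRC_def axis_sum_simps)

lemma evalR_axes: "evalR R (axis i 1) (axis j 1) (axis k 1) (axis l 1) = R i j k l"
  unfolding evalR_axis_axis by (simp add: axis_sum_simps)

lemma ipC_axis_axis: "ipC M (axis i 1) (axis j 1) = of_real (M $ i $ j)"
  by (simp add: ipC_def axis_sum_simps)

lemma alg_curv_tensor_pair_symmetric: "alg_curv_tensor R \<Longrightarrow> R i j k l = R k l i j"
  unfolding alg_curv_tensor_def by (metis evalR_axes)

lemma alg_curv_tensor_antisymmetric: "alg_curv_tensor R \<Longrightarrow> R i j k l = - R j i k l"
  unfolding alg_curv_tensor_def by (metis evalR_axes)

lemma alg_curv_tensor_ricci_symmetric:
  assumes R: "alg_curv_tensor R"
  shows "R a j i c = R c i j a"
proof -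
  have "R a j i c = R i c a j" by (rule alg_curv_tensor_pair_symmetric[OF R])
  also have "\<dots> = - R c i a j" by (rule alg_curv_tensor_antisymmetric[OF R])
  also have "R c i a j = R a j c i" by (rule alg_curv_tensor_pair_symmetric[OF R])
  also have "\<dots> = - R j a c i" by (rule alg_curv_tensor_antisymmetric[OF R])
  also have "R j a c i = R c i j a" by (rule alg_curv_tensor_pair_symmetric[OF R])
  finally show ?thesis by simp
qed

lemma matrix_inv_right:
  assumes "invertible A"
  shows "A ** matrix_inv A = mat 1"
proof -
  have "A ** matrix_inv A = mat 1 \<and> matrix_inv A ** A = mat 1"
    using assms unfolding matrix_inv_def invertible_def by (rule someI_ex)
  then show ?thesis ..
qed

lemma transpose_matrix_inv_symmetric:
  fixes A :: "'a::comm_semiring_1^'n^'n"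
  assumes "invertible A" and "transpose A = A"
  shows "transpose (matrix_inv A) = matrix_inv A"
proof -
  have left_inverse: "transpose (matrix_inv A) ** A = mat 1"
    using arg_cong[OF matrix_inv_right[OF assms(1)], of transpose] assms(2)
    by (simp add: matrix_transpose_mul transpose_mat)
  have "transpose (matrix_inv A) = transpose (matrix_inv A) ** (A ** matrix_inv A)"
    by (simp add: matrix_inv_right[OF assms(1)] matrix_mul_rid)
  also have "\<dots> = (transpose (matrix_inv A) ** A) ** matrix_inv A"
    by (simp add: matrix_mul_assoc)
  also have "\<dots> = matrix_inv A"
    using left_inverse by (simp add: matrix_mul_lid)
  finally show ?thesis .
qed

lemma invertible_nonzero_entry:
  fixes A :: "'a::comm_semiring_1^'n^'n"
  assumes "invertible A"
  obtains i j where "A $ i $ j \<noteq> 0"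
proof -
  have "A \<noteq> 0"
  proof
    assume "A = 0"
    then have "(mat 1 :: 'a^'n^'n) $ i $ i = 0" for i
      using matrix_inv_right[OF assms] by simp
    then show False by (simp add: Finite_Cartesian_Product.mat_def)
  qed
  then show thesis using that by (auto simp: vec_eq_iff)
qed

lemma transpose_eq_self_component: "transpose A = A \<Longrightarrow> A $ i $ j = A $ j $ i"
  by (metis transpose_def vec_lambda_beta)

lemma symmetric_bilinear_ipC:
  fixes M :: "real^'n^'n"
  assumes "transpose M = M"
  shows "symmetric_bilinear (ipC M)"
  unfolding symmetric_bilinear_def
proof (intro conjI allI)
  fix u v w :: "complex^'n"
  show "ipC M (u + v) w = ipC M u w + ipC M v w"
    unfolding ipC_def by (simp add: algebra_simps sum.distrib)
next
  fix c :: complex and u w :: "complex^'n"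
  show "ipC M (c *s u) w = c * ipC M u w"
    unfolding ipC_def by (simp add: sum_distrib_left mult_ac)
next
  fix u v :: "complex^'n"
  show "ipC M u v = ipC M v u"
    unfolding ipC_def
    by (subst sum.swap) (simp add: transpose_eq_self_component[OF assms] mult_ac)
qed

lemma nondegenerate_ipC:
  fixes g :: "real^'n^'n"
  assumes "invertible g"
  shows "nondegenerate (ipC g)"
  unfolding nondegenerate_def
proof (intro allI impI)
  fix u :: "complex^'n"
  assume orthogonal: "\<forall>v. ipC g u v = 0"
  have column: "(\<Sum>i\<in>UNIV. of_real (g $ i $ j) * u $ i) = 0" for j
    using orthogonal[rule_format, of "axis j 1"] by (simp add: ipC_def axis_sum_simps)
  have delta: "(\<Sum>j\<in>UNIV. g $ i $ j * matrix_inv g $ j $ k) = (if i = k then 1 else 0)" for i k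
    using arg_cong[OF matrix_inv_right[OF assms], of "\<lambda>M. M $ i $ k"]
    by (simp add: matrix_matrix_mult_def Finite_Cartesian_Product.mat_def)
  have "u $ k = 0" for k
  proof -
    have "u $ k = (\<Sum>i\<in>UNIV. of_real (\<Sum>j\<in>UNIV. g $ i $ j * matrix_inv g $ j $ k) * u $ i)"
      by (simp add: delta if_distrib[of complex_of_real] axis_sum_simps cong: if_cong)
    also have "\<dots> = (\<Sum>i\<in>UNIV. \<Sum>j\<in>UNIV. of_real (matrix_inv g $ j $ k) * (of_real (g $ i $ j) * u $ i))"
      by (simp add: sum_distrib_left sum_distrib_right mult_ac)
    also have "\<dots> = (\<Sum>j\<in>UNIV. of_real (matrix_inv g $ j $ k) * (\<Sum>i\<in>UNIV. of_real (g $ i $ j) * u $ i))"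
      by (subst sum.swap) (simp add: sum_distrib_left)
    also have "\<dots> = 0"
      by (simp add: column)
    finally show ?thesis .
  qed
  then show "u = 0" by (simp add: vec_eq_iff)
qed

lemma sum_swap_pairs:
  "(\<Sum>a\<in>A. \<Sum>c\<in>C. \<Sum>j\<in>J. \<Sum>k\<in>K. f a c j k) = (\<Sum>j\<in>J. \<Sum>k\<in>K. \<Sum>a\<in>A. \<Sum>c\<in>C. f a c j k)"
proof -
  have "(\<Sum>a\<in>A. \<Sum>c\<in>C. \<Sum>j\<in>J. \<Sum>k\<in>K. f a c j k) = (\<Sum>a\<in>A. \<Sum>j\<in>J. \<Sum>c\<in>C. \<Sum>k\<in>K. f a c j k)"
    by (rule sum.cong[OF refl], rule sum.swap)
  also have "\<dots> = (\<Sum>a\<in>A. \<Sum>j\<in>J. \<Sum>k\<in>K. \<Sum>c\<in>C. f a c j k)"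
    by (rule sum.cong[OF refl], rule sum.cong[OF refl], rule sum.swap)
  also have "\<dots> = (\<Sum>j\<in>J. \<Sum>a\<in>A. \<Sum>k\<in>K. \<Sum>c\<in>C. f a c j k)"
    by (rule sum.swap)
  also have "\<dots> = (\<Sum>j\<in>J. \<Sum>k\<in>K. \<Sum>a\<in>A. \<Sum>c\<in>C. f a c j k)"
    by (rule sum.cong[OF refl], rule sum.swap)
  finally show ?thesis .
qed

definition ricci_matrix :: "real^'n^'n \<Rightarrow> ('n::finite) tensor4 \<Rightarrow> real^'n^'n" where
  "ricci_matrix g R = (\<chi> i j. ricci g R (axis i 1) (axis j 1))"

lemma ricci_matrix_component:
  "ricci_matrix g R $ i $ j = (\<Sum>a\<in>UNIV. \<Sum>c\<in>UNIV. matrix_inv g $ a $ c * R a i j c)"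
  unfolding ricci_matrix_def ricci_def evalR_axis_axis by (simp add: axis_sum_simps)

lemma ricci_matrix_symmetric:
  assumes "nondeg_inner g" and "alg_curv_tensor R"
  shows "transpose (ricci_matrix g R) = ricci_matrix g R"
proof -
  have "transpose (matrix_inv g) = matrix_inv g"
    using assms(1) transpose_matrix_inv_symmetric unfolding nondeg_inner_def by blast
  then have "ricci_matrix g R $ j $ i = ricci_matrix g R $ i $ j" for i j
    unfolding ricci_matrix_component alg_curv_tensor_ricci_symmetric[OF assms(2), of _ j i]
    by (subst sum.swap) (simp add: transpose_eq_self_component)
  then show ?thesis by (simp add: transpose_def vec_eq_iff)
qed

lemma ricci_eq_ipR_ricci_matrix: "ricci g R x y = ipR (ricci_matrix g R) x y"
proof -
  have "ricci g R x y = (\<Sum>a\<in>UNIV. \<Sum>c\<in>UNIV. \<Sum>i\<in>UNIV. \<Sum>j\<in>UNIV.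
      matrix_inv g $ a $ c * R a i j c * x $ i * y $ j)"
    unfolding ricci_def evalR_axis_axis by (simp add: sum_distrib_left mult_ac)
  also have "\<dots> = (\<Sum>i\<in>UNIV. \<Sum>j\<in>UNIV. \<Sum>a\<in>UNIV. \<Sum>c\<in>UNIV.
      matrix_inv g $ a $ c * R a i j c * x $ i * y $ j)"
    by (rule sum_swap_pairs)
  also have "\<dots> = ipR (ricci_matrix g R) x y"
    unfolding ipR_def ricci_matrix_component by (simp add: sum_distrib_right)
  finally show ?thesis .
qed

lemma trace_jacobi_eq_ipC_ricci_matrix: "trace (jacobi g R v) = ipC (ricci_matrix g R) v v"
proof -
  have "trace (jacobi g R v) = (\<Sum>a\<in>UNIV. \<Sum>c\<in>UNIV. \<Sum>i\<in>UNIV. \<Sum>j\<in>UNIV.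
      of_real (matrix_inv g $ a $ c) * of_real (R a i j c) * v $ i * v $ j)"
    unfolding trace_def jacobi_def evalRC_axis_axis by (simp add: sum_distrib_left mult_ac)
  also have "\<dots> = (\<Sum>i\<in>UNIV. \<Sum>j\<in>UNIV. \<Sum>a\<in>UNIV. \<Sum>c\<in>UNIV.
      of_real (matrix_inv g $ a $ c) * of_real (R a i j c) * v $ i * v $ j)"
    by (rule sum_swap_pairs)
  also have "\<dots> = ipC (ricci_matrix g R) v v"
    unfolding ipC_def ricci_matrix_component by (simp add: sum_distrib_right)
  finally show ?thesis .
qed

lemma einstein_if_trace_jacobi_null_cone:
  fixes g :: "real^'n^'n"
  assumes card: "CARD('n) \<ge> 2" and g: "nondeg_inner g" and R: "alg_curv_tensor R"
    and traceless: "\<forall>x\<in>null_cone g. trace (jacobi g R x) = 0"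
  shows "einstein g R"
proof -
  have "invertible g" and "transpose g = g" using g by (auto simp: nondeg_inner_def)
  obtain c where c: "\<And>u v. ipC (ricci_matrix g R) u v = c * ipC g u v"
  proof (rule vanishes_on_null_cone_imp_proportional)
    show "symmetric_bilinear (ipC g)" by (rule symmetric_bilinear_ipC) fact
    show "nondegenerate (ipC g)" by (rule nondegenerate_ipC) fact
    show "symmetric_bilinear (ipC (ricci_matrix g R))"
      by (intro symmetric_bilinear_ipC ricci_matrix_symmetric g R)
    show "vanishes_on_null_cone (ipC g) (ipC (ricci_matrix g R))"
      using traceless
      by (simp add: vanishes_on_null_cone_def null_cone_def trace_jacobi_eq_ipC_ricci_matrix)
  qed (use card in auto)
  then have entries: "of_real (ricci_matrix g R $ i $ j) = c * of_real (g $ i $ j)" for i j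
    using c[of "axis i 1" "axis j 1"] by (simp add: ipC_axis_axis)
  obtain i0 j0 where "g $ i0 $ j0 \<noteq> 0"
    using invertible_nonzero_entry[OF \<open>invertible g\<close>] .
  define c1 where "c1 = ricci_matrix g R $ i0 $ j0 / g $ i0 $ j0"
  have "c = of_real c1"
    using entries[of i0 j0] \<open>g $ i0 $ j0 \<noteq> 0\<close> by (simp add: c1_def field_simps)
  then have "ricci_matrix g R $ i $ j = c1 * g $ i $ j" for i j
    using entries[of i j] by (metis of_real_eq_iff of_real_mult)
  then have "ricci g R x y = c1 * ipR g x y" for x y
    unfolding ricci_eq_ipR_ricci_matrix ipR_def by (simp add: sum_distrib_left mult_ac)
  then show ?thesis unfolding einstein_def by blast
qed

theorem lemma2p1:
  fixes g :: "real^'n^'n" and R :: "'n tensor4"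
  assumes "CARD('n) \<ge> 3"
    and "nondeg_inner g"
    and "alg_curv_tensor R"
  shows "(\<forall>k::nat. k \<ge> 1 \<longrightarrow> k_stein g R k \<longrightarrow>
            (\<forall>x\<in>null_cone g. trace (matpow (jacobi g R x) k) = 0))
       \<and> (k_stein g R CARD('n) \<longrightarrow>
            (\<forall>x\<in>null_cone g. nilpotent_mat (jacobi g R x)))
       \<and> ((\<forall>x\<in>null_cone g. trace (jacobi g R x) = 0) \<longrightarrow> einstein g R)"
proof (intro conjI allI impI ballI)
  fix k :: nat and x
  assume "k \<ge> 1" "k_stein g R k" "x \<in> null_cone g"
  then show "trace (matpow (jacobi g R x) k) = 0"
    by (rule k_stein_trace_jacobi_power_null_cone)
next
  fix x
  assume stein: "k_stein g R CARD('n)" and "x \<in> null_cone g"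
  show "nilpotent_mat (jacobi g R x)"
  proof (rule nilpotent_mat_if_trace_powers_zero)
    fix k assume "k \<in> {1..CARD('n)}"
    then show "trace (matpow (jacobi g R x) k) = 0"
      using \<open>x \<in> null_cone g\<close>
      by (intro k_stein_trace_jacobi_power_null_cone k_stein_mono[OF _ stein]) auto
  qed
next
  assume "\<forall>x\<in>null_cone g. trace (jacobi g R x) = 0"
  with assms show "einstein g R"
    by (intro einstein_if_trace_jacobi_null_cone) simp_all
qed

end
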